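(* For every even integer $m\ge 4$ there exist a positive integer $n$ and a tensor in $T_{m,n}$ that is a $B$ tensor but not a $P$ tensor, and a tensor in $T_{m,n}$ that is a $B_0$ tensor but not a $P_0$ tensor.
   Context: $T_{m,n}$ denotes the set of real $m$th order $n$-dimensional tensors $\mathbb{A}=(a_{i_1i_2\ldots i_m})$ with $i_j\in[n]=\{1,\ldots,n\}$. For $x\in\mathbb{R}^n$, $(\mathbb{A}x^{m-1})_i=\sum_{i_2,\ldots,i_m=1}^n a_{ii_2\ldots i_m}x_{i_2}\cdots x_{i_m}$. $\mathbb{A}$ is a $P$ tensor if for every nonzero $x\in\mathbb{R}^n$, $\max_{i\in[n]}x_i(\mathbb{A}x^{m-1})_i>0$; it is a $P_0$ tensor if for every nonzero $x\in\mathbb{R}^n$ there is $i\in[n]$ with $x_i\ne0$ and $x_i(\mathbb{A}x^{m-1})_i\ge0$. $\mathbb{A}$ is a $B$ tensor if for all $i\in[n]$, $\sum_{i_2,\ldots,i_m=1}^n a_{ii_2\ldots i_m}>0$ and $\frac{1}{n^{m-1}}\sum_{i_2,\ldots,i_m=1}^n a_{ii_2\ldots i_m}>a_{ij_2\ldots j_m}$ for all $(j_2,\ldots,j_m)\neq(i,\ldots,i)$. $\mathbb{A}$ is a $B_0$ tensor if for all $i\in[n]$, $\sum_{i_2,\ldots,i_m=1}^n a_{ii_2\ldots i_m}\ge0$ and $\frac{1}{n^{m-1}}\sum_{i_2,\ldots,i_m=1}^n a_{ii_2\ldots i_m}\ge a_{ij_2\ldots j_m}$ for all $(j_2,\ldots,j_m)\neq(i,\ldots,i)$.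 *)

theory Defs
  imports Main Complex_Main
begin

text \<open>A real tensor of order m and dimension n is represented as a function
  A :: nat list \<Rightarrow> real, where the entry a_{i_1 ... i_m} is A [i_1,...,i_m];
  indices are 0-based, ranging over {0..<n}. Only values on index lists of
  length m with entries < n are relevant. Vectors in R^n are functions
  x :: nat \<Rightarrow> real, of which only the values at 0..<n matter.\<close>

definition idx :: "nat \<Rightarrow> nat \<Rightarrow> nat list set" where
  "idx k n = {is. length is = k \<and> set is \<subseteq> {..<n}}"

definition tvec :: "nat \<Rightarrow> nat \<Rightarrow> (nat list \<Rightarrow> real) \<Rightarrow> (nat \<Rightarrow> real) \<Rightarrow> nat \<Rightarrow> real" where
  "tvec m n A x i = (\<Sum>is\<in>idx (m - 1) n. A (i # is) * prod_list (map x is))"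

definition nonzero_vec :: "nat \<Rightarrow> (nat \<Rightarrow> real) \<Rightarrow> bool" where
  "nonzero_vec n x \<longleftrightarrow> (\<exists>i<n. x i \<noteq> 0)"

definition P_tensor :: "nat \<Rightarrow> nat \<Rightarrow> (nat list \<Rightarrow> real) \<Rightarrow> bool" where
  "P_tensor m n A \<longleftrightarrow>
     (\<forall>x. nonzero_vec n x \<longrightarrow> Max ((\<lambda>i. x i * tvec m n A x i) ` {..<n}) > 0)"

definition P0_tensor :: "nat \<Rightarrow> nat \<Rightarrow> (nat list \<Rightarrow> real) \<Rightarrow> bool" where
  "P0_tensor m n A \<longleftrightarrow>
     (\<forall>x. nonzero_vec n x \<longrightarrow> (\<exists>i<n. x i \<noteq> 0 \<and> x i * tvec m n A x i \<ge> 0))"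

definition row_sum :: "nat \<Rightarrow> nat \<Rightarrow> (nat list \<Rightarrow> real) \<Rightarrow> nat \<Rightarrow> real" where
  "row_sum m n A i = (\<Sum>is\<in>idx (m - 1) n. A (i # is))"

definition B_tensor :: "nat \<Rightarrow> nat \<Rightarrow> (nat list \<Rightarrow> real) \<Rightarrow> bool" where
  "B_tensor m n A \<longleftrightarrow>
     (\<forall>i<n. row_sum m n A i > 0 \<and>
        (\<forall>js\<in>idx (m - 1) n. js \<noteq> replicate (m - 1) i \<longrightarrow>
            row_sum m n A i / real n ^ (m - 1) > A (i # js)))"

definition B0_tensor :: "nat \<Rightarrow> nat \<Rightarrow> (nat list \<Rightarrow> real) \<Rightarrow> bool" where
  "B0_tensor m n A \<longleftrightarrow>
     (\<forall>i<n. row_sum m n A i \<ge> 0 \<and>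
        (\<forall>js\<in>idx (m - 1) n. js \<noteq> replicate (m - 1) i \<longrightarrow>
            row_sum m n A i / real n ^ (m - 1) \<ge> A (i # js)))"

end

theory Submission
  imports Defs
begin

text \<open>Take n = 4 and x = (-2, 1, 1, 1), whose coordinates sum to 1. Row 0 of the tensor
  has every entry 2^m except a_{00...0} = 2^m + 1, so (A x^{m-1})_0 = 2^m + (-2)^{m-1} > 0.
  For i \<noteq> 0 row i has a_{ii...i} = 2 and a_{i00i...i} = -1, all else 0, so
  (A x^{m-1})_i = 2 - x_0^2 = -2. Hence x_i (A x^{m-1})_i < 0 for every i, ruling out
  both the P and the P_0 property. Each row is B: its mean strictly exceeds its
  off-diagonal entries (the mean of row 0 is 2^m + 4^{1-m}, the mean of row i \<noteq> 0
  is positive while its off-diagonal entries are at most 0).\<close>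

lemma finite_idx: "finite (idx k n)"
  unfolding idx_def using finite_lists_length_eq[of "{..<n}" k]
  by (simp add: conj_commute)

lemma card_idx: "card (idx k n) = n ^ k"
  unfolding idx_def using card_lists_length_eq[of "{..<n}" k]
  by (simp add: conj_commute)

lemma idx_Suc: "idx (Suc k) n = (\<lambda>(i, is). i # is) ` ({..<n} \<times> idx k n)"
  unfolding idx_def by (auto simp: image_iff length_Suc_conv)

lemma sum_idx_prod_list:
  fixes x :: "nat \<Rightarrow> 'a :: comm_semiring_1"
  shows "(\<Sum>is\<in>idx k n. prod_list (map x is)) = (\<Sum>i<n. x i) ^ k"
proof (induction k)
  case 0
  have "idx 0 n = {[]}" unfolding idx_def by auto
  then show ?case by simp
next
  case (Suc k)
  have inj: "inj_on (\<lambda>(i, is). i # is) ({..<n} \<times> idx k n)"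
    by (auto simp: inj_on_def)
  have "(\<Sum>is\<in>idx (Suc k) n. prod_list (map x is))
      = (\<Sum>(i, is)\<in>{..<n} \<times> idx k n. x i * prod_list (map x is))"
    unfolding idx_Suc by (subst sum.reindex[OF inj]) (auto simp: split_def)
  also have "\<dots> = (\<Sum>i<n. x i) * (\<Sum>is\<in>idx k n. prod_list (map x is))"
    by (simp add: sum.cartesian_product[symmetric] sum_product)
  finally show ?case using Suc by simp
qed

lemma B_tensor_imp_B0_tensor: "B_tensor m n A \<Longrightarrow> B0_tensor m n A"
  unfolding B_tensor_def B0_tensor_def by (auto intro: less_imp_le)

lemma not_P_tensor_if_all_negative:
  assumes "nonzero_vec n x" and "\<And>i. i < n \<Longrightarrow> x i * tvec m n A x i < 0"
  shows "\<not> P_tensor m n A"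
proof
  assume "P_tensor m n A"
  then have "Max ((\<lambda>i. x i * tvec m n A x i) ` {..<n}) > 0"
    using assms(1) unfolding P_tensor_def by blast
  moreover have "{..<n} \<noteq> {}"
    using assms(1) unfolding nonzero_vec_def by auto
  then have "Max ((\<lambda>i. x i * tvec m n A x i) ` {..<n}) \<in> (\<lambda>i. x i * tvec m n A x i) ` {..<n}"
    by (intro Max_in) auto
  ultimately show False using assms(2) by fastforce
qed

lemma not_P0_tensor_if_all_negative:
  assumes "nonzero_vec n x" and "\<And>i. i < n \<Longrightarrow> x i * tvec m n A x i < 0"
  shows "\<not> P0_tensor m n A"
  using assms unfolding P0_tensor_def by (meson not_le)

definition counterexample_tensor :: "nat \<Rightarrow> nat list \<Rightarrow> real" where
  "counterexample_tensor m l = (case l of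
       [] \<Rightarrow> 0
     | i # is \<Rightarrow>
         if i = 0 then 2 ^ m + (if is = replicate (m - 1) 0 then 1 else 0)
         else (if is = replicate (m - 1) i then 2 else 0)
            - (if is = [0, 0] @ replicate (m - 3) i then 1 else 0))"

definition counterexample_vector :: "nat \<Rightarrow> real" where
  "counterexample_vector i = (if i = 0 then -2 else 1)"

lemma counterexample_tensor_row_0:
  "counterexample_tensor m (0 # is) = 2 ^ m + (if is = replicate (m - 1) 0 then 1 else 0)"
  by (simp add: counterexample_tensor_def)

lemma counterexample_tensor_row:
  "i \<noteq> 0 \<Longrightarrow> counterexample_tensor m (i # is) =
     (if is = replicate (m - 1) i then 2 else 0) - (if is = [0, 0] @ replicate (m - 3) i then 1 else 0)"
  by (simp add: counterexample_tensor_def)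

lemma replicate_in_idx: "i < n \<Longrightarrow> replicate k i \<in> idx k n"
  by (auto simp: idx_def)

lemma two_zeros_replicate_in_idx:
  "m \<ge> 3 \<Longrightarrow> i < n \<Longrightarrow> [0, 0] @ replicate (m - 3) i \<in> idx (m - 1) n"
  by (auto simp: idx_def)

lemma sum_idx_row_0:
  assumes "0 < n"
  shows "(\<Sum>is\<in>idx (m - 1) n. counterexample_tensor m (0 # is) * f is)
     = 2 ^ m * (\<Sum>is\<in>idx (m - 1) n. f is) + f (replicate (m - 1) 0)"
proof -
  let ?d = "replicate (m - 1) 0"
  have "(\<Sum>is\<in>idx (m - 1) n. counterexample_tensor m (0 # is) * f is)
      = (\<Sum>is\<in>idx (m - 1) n. 2 ^ m * f is + (if is = ?d then f ?d else 0))"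
    by (intro sum.cong) (auto simp: counterexample_tensor_row_0 distrib_right)
  also have "\<dots> = 2 ^ m * (\<Sum>is\<in>idx (m - 1) n. f is) + f ?d"
    using replicate_in_idx[OF assms]
    by (simp add: sum.distrib sum_distrib_left finite_idx)
  finally show ?thesis .
qed

lemma sum_idx_row:
  assumes "m \<ge> 3" and "i \<noteq> 0" and "i < n"
  shows "(\<Sum>is\<in>idx (m - 1) n. counterexample_tensor m (i # is) * f is)
     = 2 * f (replicate (m - 1) i) - f ([0, 0] @ replicate (m - 3) i)"
proof -
  let ?d = "replicate (m - 1) i" and ?s = "[0, 0] @ replicate (m - 3) i"
  have "(\<Sum>is\<in>idx (m - 1) n. counterexample_tensor m (i # is) * f is)
      = (\<Sum>is\<in>idx (m - 1) n. (if is = ?d then 2 * f ?d else 0) - (if is = ?s then f ?s else 0))"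
    using assms(2) by (intro sum.cong) (auto simp: counterexample_tensor_row left_diff_distrib)
  also have "\<dots> = 2 * f ?d - f ?s"
    using replicate_in_idx[OF assms(3)] two_zeros_replicate_in_idx[OF assms(1,3)]
    by (simp add: sum_subtractf finite_idx)
  finally show ?thesis .
qed

lemma row_sum_counterexample_tensor_0:
  "0 < n \<Longrightarrow> row_sum m n (counterexample_tensor m) 0 = 2 ^ m * real n ^ (m - 1) + 1"
  using sum_idx_row_0[of n m "\<lambda>_. 1"] unfolding row_sum_def by (simp add: card_idx)

lemma row_sum_counterexample_tensor:
  "m \<ge> 3 \<Longrightarrow> i \<noteq> 0 \<Longrightarrow> i < n \<Longrightarrow> row_sum m n (counterexample_tensor m) i = 1"
  using sum_idx_row[of m i n "\<lambda>_. 1"] unfolding row_sum_def by simp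

lemma B_tensor_counterexample_tensor:
  assumes "m \<ge> 3" and "0 < n"
  shows "B_tensor m n (counterexample_tensor m)"
  unfolding B_tensor_def
proof (intro allI impI conjI ballI)
  fix i js
  assume i: "i < n"
  let ?r = "row_sum m n (counterexample_tensor m) i"
  have N: "real n ^ (m - 1) > 0" using assms(2) by simp
  show "?r > 0"
    using row_sum_counterexample_tensor_0[OF assms(2)]
      row_sum_counterexample_tensor[OF assms(1) _ i] N
    by (cases "i = 0") (auto intro: add_pos_pos)
  assume "js \<in> idx (m - 1) n" and js: "js \<noteq> replicate (m - 1) i"
  show "?r / real n ^ (m - 1) > counterexample_tensor m (i # js)"
  proof (cases "i = 0")
    case True
    have "?r / real n ^ (m - 1) = 2 ^ m + 1 / real n ^ (m - 1)"
      using True row_sum_counterexample_tensor_0 assms(2) N by (simp add: add_divide_distrib)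
    then show ?thesis using True js N by (simp add: counterexample_tensor_row_0)
  next
    case False
    have "counterexample_tensor m (i # js) \<le> 0"
      using False js by (simp add: counterexample_tensor_row)
    moreover have "?r / real n ^ (m - 1) > 0"
      using row_sum_counterexample_tensor[OF assms(1) False i] N by simp
    ultimately show ?thesis by linarith
  qed
qed

lemma sum_counterexample_vector: "(\<Sum>i<4. counterexample_vector i) = 1"
  by (simp add: counterexample_vector_def numeral_eq_Suc)

lemma tvec_counterexample_0:
  "tvec m 4 (counterexample_tensor m) counterexample_vector 0 = 2 ^ m + (-2) ^ (m - 1)"
proof -
  have "tvec m 4 (counterexample_tensor m) counterexample_vector 0
      = 2 ^ m * (\<Sum>is\<in>idx (m - 1) 4. prod_list (map counterexample_vector is))
        + prod_list (map counterexample_vector (replicate (m - 1) 0))"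
    unfolding tvec_def by (rule sum_idx_row_0) simp
  then show ?thesis
    unfolding sum_idx_prod_list sum_counterexample_vector by (simp add: counterexample_vector_def)
qed

lemma tvec_counterexample:
  assumes "m \<ge> 3" and "i \<noteq> 0" and "i < 4"
  shows "tvec m 4 (counterexample_tensor m) counterexample_vector i = -2"
proof -
  have "tvec m 4 (counterexample_tensor m) counterexample_vector i
      = 2 * prod_list (map counterexample_vector (replicate (m - 1) i))
        - prod_list (map counterexample_vector ([0, 0] @ replicate (m - 3) i))"
    unfolding tvec_def using assms by (rule sum_idx_row)
  then show ?thesis using assms(2) by (simp add: counterexample_vector_def)
qed

lemma counterexample_all_negative:
  assumes "m \<ge> 3" and "i < 4"
  shows "counterexample_vector i * tvec m 4 (counterexample_tensor m) counterexample_vector i < 0"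
proof (cases "i = 0")
  case True
  have "(-2 :: real) ^ (m - 1) \<ge> - (2 ^ (m - 1))"
    using abs_ge_minus_self[of "(-2 :: real) ^ (m - 1)"] by (simp add: power_abs)
  moreover have "(2 :: real) ^ (m - 1) < 2 ^ m" using assms(1) by simp
  ultimately have "tvec m 4 (counterexample_tensor m) counterexample_vector 0 > 0"
    unfolding tvec_counterexample_0 by linarith
  then show ?thesis using True by (simp add: counterexample_vector_def)
qed (use assms tvec_counterexample in \<open>simp add: counterexample_vector_def\<close>)

lemma nonzero_vec_counterexample_vector: "nonzero_vec 4 counterexample_vector"
  unfolding nonzero_vec_def counterexample_vector_def by auto

theorem proposition3p1:
  fixes m :: nat
  assumes "even m" and "m \<ge> 4"
  shows "\<exists>n>0. (\<exists>A. B_tensor m n A \<and> \<not> P_tensor m n A) \<and>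
                (\<exists>A. B0_tensor m n A \<and> \<not> P0_tensor m n A)"
proof -
  \<comment> \<open>The construction works for every m \<ge> 3.\<close>
  have "m \<ge> 3" using assms(2) by simp
  let ?A = "counterexample_tensor m"
  have B: "B_tensor m 4 ?A"
    using B_tensor_counterexample_tensor[OF \<open>m \<ge> 3\<close>] by simp
  have "\<not> P_tensor m 4 ?A" "\<not> P0_tensor m 4 ?A"
    using not_P_tensor_if_all_negative not_P0_tensor_if_all_negative
      nonzero_vec_counterexample_vector counterexample_all_negative[OF \<open>m \<ge> 3\<close>] by blast+
  with B B_tensor_imp_B0_tensor show ?thesis by (intro exI[of _ 4]) auto
qed

end
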